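(* Let $\mathcal{H}$ be a Hilbert space of finite dimension $d$, let $\rho,\eta\in\mathcal{D}(\mathcal{H})$ be quantum states and let $0<s<1$. Then $\eta=\frac{\rho-s'\tau}{1-s'}$ for some real number $0<s'\le s$ and some state $\tau\in\mathcal{D}(\mathcal{H})$ if and only if $S_m\!\left(\frac1s\rho-\frac{1-s}{s}\eta\right)\ge0$ for all $m=1,2,\dots,d$.
   Context: $\mathcal{D}(\mathcal{H})$ is the set of density operators on $\mathcal{H}$. For a Hermitian operator $X$ on $\mathcal{H}$, define recursively $S_0(X)=1$ and $S_m(X)=\frac1m\sum_{l=1}^m(-1)^{l-1}\operatorname{tr}[X^l]\,S_{m-l}(X)$ for $m\ge1$. *)

theory Defs
  imports "HOL-Analysis.Analysis"
begin

text \<open>Operators on a d-dimensional Hilbert space are d x d complex matrices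
  indexed by a finite type 'n, with d = CARD('n).\<close>

definition adjoint_cmat :: "complex^'n^'n \<Rightarrow> complex^'n^'n" where
  "adjoint_cmat A = (\<chi> i j. cnj (A $ j $ i))"

definition hermitian_cmat :: "complex^'n^'n \<Rightarrow> bool" where
  "hermitian_cmat A \<longleftrightarrow> adjoint_cmat A = A"

definition psd_cmat :: "complex^'n^'n \<Rightarrow> bool" where
  "psd_cmat A \<longleftrightarrow> hermitian_cmat A \<and>
     (\<forall>x::complex^'n. (\<Sum>i\<in>UNIV. cnj (x $ i) * (A *v x) $ i) \<in> \<real> \<and>
                      0 \<le> Re (\<Sum>i\<in>UNIV. cnj (x $ i) * (A *v x) $ i))"

definition density_ops :: "(complex^'n^'n) set" where
  "density_ops = {A. psd_cmat A \<and> trace A = 1}"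

fun mpow :: "complex^'n^'n \<Rightarrow> nat \<Rightarrow> complex^'n^'n" where
  "mpow A 0 = mat 1"
| "mpow A (Suc k) = A ** mpow A k"

function Sfun :: "nat \<Rightarrow> complex^'n^'n \<Rightarrow> complex" where
  "Sfun 0 X = 1"
| "Sfun (Suc m) X = (1 / of_nat (Suc m)) *
      (\<Sum>l\<in>{1..Suc m}. (-1) ^ (l - 1) * trace (mpow X l) * Sfun (Suc m - l) X)"
  by pat_completeness auto
termination
  by (relation "Wellfounded.measure fst") auto

end

theory Submission
  imports Defs "Jordan_Normal_Form.Schur_Decomposition"
begin

text \<open>Put \<open>X = \<rho>/s - (1 - s)/s \<eta>\<close>. Solving for \<open>\<tau>\<close> shows that \<open>\<eta>\<close> has the stated form iff
  \<open>X\<close> is a density operator, and since \<open>tr X = 1\<close> always holds, iff \<open>X\<close> is positive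
  semidefinite. A Schur triangularisation gives \<open>tr X\<^sup>l = \<Sum>\<^sub>i \<lambda>\<^sub>i\<^sup>l\<close> for the eigenvalues \<open>\<lambda>\<^sub>i\<close> of \<open>X\<close>,
  and the recursion defining \<open>S\<^sub>m\<close> is Newton's identity, so \<open>S\<^sub>m(X) = e\<^sub>m(\<lambda>)\<close>, the elementary
  symmetric polynomial. The \<open>\<lambda>\<^sub>i\<close> are real as \<open>X\<close> is Hermitian, and real numbers are all
  nonnegative iff all \<open>e\<^sub>m\<close> are, because \<open>\<Prod>\<^sub>i (1 + \<lambda>\<^sub>i u) = \<Sum>\<^sub>m e\<^sub>m u\<^sup>m\<close> has no positive root
  when the \<open>e\<^sub>m\<close> are nonnegative. Finally a Hermitian matrix is positive semidefinite iff its
  eigenvalues are nonnegative, the least one being the minimum of the Rayleigh quotient.\<close>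

no_notation vec_index (infixl "$" 100)

section \<open>Elementary symmetric polynomials and Newton's identities\<close>

definition power_sum :: "'a::comm_ring_1 list \<Rightarrow> nat \<Rightarrow> 'a" where
  "power_sum xs l = (\<Sum>x\<leftarrow>xs. x ^ l)"

fun elem_sym :: "'a::comm_ring_1 list \<Rightarrow> nat \<Rightarrow> 'a" where
  "elem_sym [] m = (if m = 0 then 1 else 0)"
| "elem_sym (x # xs) 0 = 1"
| "elem_sym (x # xs) (Suc m) = elem_sym xs (Suc m) + x * elem_sym xs m"

lemma power_sum_Cons [simp]: "power_sum (x # xs) l = x ^ l + power_sum xs l"
  by (simp add: power_sum_def)

lemma elem_sym_0 [simp]: "elem_sym xs 0 = 1"
  by (cases xs) auto

lemma elem_sym_Cons:
  "elem_sym (x # xs) m = elem_sym xs m + (if m = 0 then 0 else x * elem_sym xs (m - 1))"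
  by (cases m) auto

lemma elem_sym_eq_0: "length xs < m \<Longrightarrow> elem_sym xs m = 0"
  by (induction xs arbitrary: m) (auto simp: elem_sym_Cons)

lemma elem_sym_map_of_real: "elem_sym (map of_real xs) m = of_real (elem_sym xs m)"
  by (induction xs arbitrary: m) (auto simp: elem_sym_Cons)

lemma alternating_sum_elem_sym_Cons:
  "(\<Sum>i\<le>k. (-1) ^ i * x ^ Suc i * elem_sym (x # xs) (k - i)) = x * elem_sym xs k"
proof (induction k)
  case 0
  show ?case by simp
next
  case (Suc k)
  have "(\<Sum>i\<le>Suc k. (-1) ^ i * x ^ Suc i * elem_sym (x # xs) (Suc k - i))
      = x * elem_sym (x # xs) (Suc k) - x * (\<Sum>i\<le>k. (-1) ^ i * x ^ Suc i * elem_sym (x # xs) (k - i))"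
    by (subst sum.atMost_Suc_shift) (simp add: sum_distrib_left sum_negf mult_ac)
  then show ?case
    using Suc.IH by (simp add: algebra_simps)
qed

theorem newton_identity:
  "of_nat k * elem_sym xs k = (\<Sum>i<k. (-1) ^ i * power_sum xs (Suc i) * elem_sym xs (k - Suc i))"
proof (induction xs arbitrary: k)
  case Nil
  show ?case by (simp add: power_sum_def)
next
  case (Cons x xs)
  show ?case
  proof (cases k)
    case 0
    then show ?thesis by simp
  next
    case (Suc j)
    have shifted: "(\<Sum>i<Suc j. (-1) ^ i * power_sum xs (Suc i) *
                     (if j - i = 0 then 0 else x * elem_sym xs (j - i - 1)))
                 = x * of_nat j * elem_sym xs j"
      using Cons.IH[of j]
      by (simp add: lessThan_Suc sum_distrib_left mult_ac Suc_diff_Suc)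
    have split_power_sum:
      "(\<Sum>i<k. (-1) ^ i * power_sum (x # xs) (Suc i) * elem_sym (x # xs) (k - Suc i))
        = (\<Sum>i<Suc j. (-1) ^ i * power_sum xs (Suc i) * elem_sym (x # xs) (j - i))
          + (\<Sum>i\<le>j. (-1) ^ i * x ^ Suc i * elem_sym (x # xs) (j - i))"
      unfolding Suc power_sum_Cons lessThan_Suc_atMost[symmetric]
      by (simp add: sum.distrib algebra_simps)
    have split_elem_sym:
      "(\<Sum>i<Suc j. (-1) ^ i * power_sum xs (Suc i) * elem_sym (x # xs) (j - i))
        = (\<Sum>i<k. (-1) ^ i * power_sum xs (Suc i) * elem_sym xs (k - Suc i))
          + (\<Sum>i<Suc j. (-1) ^ i * power_sum xs (Suc i) *
               (if j - i = 0 then 0 else x * elem_sym xs (j - i - 1)))"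
      unfolding Suc elem_sym_Cons[of x xs] by (simp add: sum.distrib algebra_simps)
    show ?thesis
      unfolding split_power_sum split_elem_sym Cons.IH[of k, symmetric] shifted
        alternating_sum_elem_sym_Cons
      by (simp add: Suc algebra_simps)
  qed
qed

lemma prod_list_one_plus_eq_elem_sym:
  "(\<Prod>x\<leftarrow>xs. 1 + x * u) = (\<Sum>m\<le>length xs. elem_sym xs m * u ^ m)"
proof (induction xs)
  case Nil
  show ?case by simp
next
  case (Cons x xs)
  let ?n = "length xs"
  have "(\<Sum>m\<le>Suc ?n. elem_sym (x # xs) m * u ^ m)
      = (\<Sum>m\<le>Suc ?n. elem_sym xs m * u ^ m)
        + (\<Sum>m\<le>Suc ?n. (if m = 0 then 0 else x * elem_sym xs (m - 1)) * u ^ m)"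
    unfolding elem_sym_Cons by (simp add: sum.distrib algebra_simps)
  also have "(\<Sum>m\<le>Suc ?n. elem_sym xs m * u ^ m) = (\<Sum>m\<le>?n. elem_sym xs m * u ^ m)"
    by (simp add: elem_sym_eq_0)
  also have "(\<Sum>m\<le>Suc ?n. (if m = 0 then 0 else x * elem_sym xs (m - 1)) * u ^ m)
      = x * u * (\<Sum>m\<le>?n. elem_sym xs m * u ^ m)"
    by (subst sum.atMost_Suc_shift) (simp add: sum_distrib_left mult_ac)
  finally show ?case
    using Cons.IH by (simp add: algebra_simps)
qed

lemma elem_sym_nonneg: "\<forall>x\<in>set xs. 0 \<le> (x::'a::linordered_idom) \<Longrightarrow> 0 \<le> elem_sym xs m"
  by (induction xs arbitrary: m) (auto simp: elem_sym_Cons)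

lemma elem_sym_nonneg_iff:
  fixes xs :: "'a::linordered_field list"
  shows "(\<forall>m\<in>{1..length xs}. 0 \<le> elem_sym xs m) \<longleftrightarrow> (\<forall>x\<in>set xs. 0 \<le> x)"
proof
  assume nonneg: "\<forall>m\<in>{1..length xs}. 0 \<le> elem_sym xs m"
  show "\<forall>x\<in>set xs. 0 \<le> x"
  proof (rule ccontr)
    assume "\<not> (\<forall>x\<in>set xs. 0 \<le> x)"
    then obtain r where r: "r \<in> set xs" "r < 0" by auto
    define u where "u = - 1 / r"
    have "u > 0" using r by (simp add: u_def)
    have "1 + r * u = 0" using r by (simp add: u_def)
    then have "(\<Sum>m\<le>length xs. elem_sym xs m * u ^ m) = 0"
      using r(1) by (simp add: prod_list_one_plus_eq_elem_sym[symmetric] prod_list_zero_iff)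
    moreover have "(\<Sum>m\<le>length xs. elem_sym xs m * u ^ m)
        = 1 + (\<Sum>m\<in>{1..length xs}. elem_sym xs m * u ^ m)"
      by (simp add: atMost_atLeast0 sum.atLeast_Suc_atMost)
    moreover have "0 \<le> (\<Sum>m\<in>{1..length xs}. elem_sym xs m * u ^ m)"
      using nonneg \<open>u > 0\<close> by (auto intro!: sum_nonneg)
    ultimately show False by simp
  qed
qed (auto intro: elem_sym_nonneg)

lemma Sfun_eq_elem_sym:
  assumes "\<And>l. trace (mpow X l) = power_sum es l"
  shows "Sfun m X = elem_sym es m"
proof (induction m rule: less_induct)
  case (less m)
  show ?case
  proof (cases m)
    case (Suc k)
    have "(\<Sum>l\<in>{1..Suc k}. (-1) ^ (l - 1) * trace (mpow X l) * Sfun (Suc k - l) X)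
        = (\<Sum>i<Suc k. (-1) ^ i * power_sum es (Suc i) * elem_sym es (Suc k - Suc i))"
      using less.IH Suc assms
      by (simp add: sum.atLeast1_atMost_eq del: mpow.simps)
    also have "\<dots> = of_nat (Suc k) * elem_sym es (Suc k)"
      by (rule newton_identity[symmetric])
    finally show ?thesis
      unfolding Suc by (simp del: of_nat_Suc)
  qed simp
qed

section \<open>Hermitian and positive semidefinite matrices\<close>

text \<open>Positivity of \<open>\<langle>x, f x\<rangle>\<close> along the line \<open>v - t f v\<close>, whose quadratic form is
  \<open>-2t\<parallel>f v\<parallel>\<^sup>2 + t\<^sup>2\<langle>f v, f (f v)\<rangle>\<close>, forces \<open>f v = 0\<close>.\<close>
lemma self_adjoint_nonneg_eq_0:
  fixes f :: "'a::real_inner \<Rightarrow> 'a"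
  assumes "linear f"
    and self_adjoint: "\<And>x y. inner x (f y) = inner (f x) y"
    and nonneg: "\<And>x. 0 \<le> inner x (f x)"
    and "inner v (f v) = 0"
  shows "f v = 0"
proof -
  define w where "w = f v"
  define a where "a = inner w w"
  define b where "b = inner w (f w)"
  have "b \<ge> 0" unfolding b_def by (rule nonneg)
  have line: "inner (v - t *\<^sub>R w) (f (v - t *\<^sub>R w)) = t\<^sup>2 * b - 2 * t * a" for t
    using \<open>inner v (f v) = 0\<close> self_adjoint[of v w]
    by (simp add: linear_diff[OF \<open>linear f\<close>] linear_cmul[OF \<open>linear f\<close>] inner_diff_left
      inner_diff_right a_def b_def w_def inner_commute power2_eq_square algebra_simps)
  define t where "t = a / (b + 1)"
  have tb: "t * (b + 1) = a"
    using \<open>b \<ge> 0\<close> by (simp add: t_def)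
  have "0 \<le> (t\<^sup>2 * b - 2 * t * a) * (b + 1)\<^sup>2"
    using nonneg line by (metis zero_le_mult_iff zero_le_power2)
  also have "\<dots> = (t * (b + 1))\<^sup>2 * b - 2 * (t * (b + 1)) * a * (b + 1)"
    by (simp add: power2_eq_square algebra_simps)
  also have "\<dots> = - (a\<^sup>2 * (b + 2))"
    unfolding tb by (simp add: power2_eq_square algebra_simps)
  finally have "a\<^sup>2 * (b + 2) \<le> 0" by simp
  then have "a = 0"
    using \<open>b \<ge> 0\<close> by (smt (verit) mult_pos_pos zero_less_power2)
  then show ?thesis
    by (simp add: a_def w_def)
qed

definition cinner :: "complex^'n \<Rightarrow> complex^'n \<Rightarrow> complex" where
  "cinner x y = (\<Sum>i\<in>UNIV. cnj (x $ i) * y $ i)"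

lemma cnj_cinner: "cnj (cinner x y) = cinner y x"
  by (simp add: cinner_def mult.commute)

lemma Re_cinner: "Re (cinner x y) = inner x y"
  by (simp add: cinner_def inner_vec_def inner_complex_def Re_sum)

lemma cinner_self: "cinner x x = of_real (inner x x)"
  using cnj_cinner[of x x] Re_cinner[of x x]
  by (metis Reals_cnj_iff Re_complex_of_real complex_eq_iff of_real_Re)

lemma cinner_smult_right: "cinner x (c *s y) = c * cinner x y"
  by (simp add: cinner_def sum_distrib_left mult_ac)

lemma hermitian_cmat_iff: "hermitian_cmat A \<longleftrightarrow> (\<forall>i j. cnj (A $ j $ i) = A $ i $ j)"
  by (auto simp: hermitian_cmat_def adjoint_cmat_def Finite_Cartesian_Product.vec_eq_iff)

lemma hermitian_cinner_mult_vec: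
  assumes "hermitian_cmat A"
  shows "cinner x (A *v y) = cinner (A *v x) y"
proof -
  have "cinner x (A *v y) = (\<Sum>i\<in>UNIV. \<Sum>j\<in>UNIV. cnj (x $ i) * A $ i $ j * y $ j)"
    by (simp add: cinner_def matrix_vector_mult_def sum_distrib_left mult_ac)
  also have "\<dots> = (\<Sum>j\<in>UNIV. \<Sum>i\<in>UNIV. cnj (x $ i) * A $ i $ j * y $ j)"
    by (rule sum.swap)
  also have "\<dots> = cinner (A *v x) y"
    using assms by (simp add: hermitian_cmat_iff cinner_def matrix_vector_mult_def
      sum_distrib_left mult_ac)
  finally show ?thesis .
qed

lemma hermitian_inner_mult_vec: "hermitian_cmat A \<Longrightarrow> inner x (A *v y) = inner (A *v x) y"
  by (metis Re_cinner hermitian_cinner_mult_vec)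

lemma hermitian_cinner_real: "hermitian_cmat A \<Longrightarrow> cinner x (A *v x) \<in> \<real>"
  by (metis Reals_cnj_iff cnj_cinner hermitian_cinner_mult_vec)

lemma psd_cmat_iff: "psd_cmat A \<longleftrightarrow> hermitian_cmat A \<and> (\<forall>x. 0 \<le> inner x (A *v x))"
  using hermitian_cinner_real[of A] by (auto simp: psd_cmat_def Re_cinner[symmetric] cinner_def)

lemma hermitian_eigenvalue_real:
  assumes "hermitian_cmat A" and "v \<noteq> 0" and "A *v v = c *s v"
  shows "c \<in> \<real>"
proof -
  have "c * of_real (inner v v) \<in> \<real>"
    using hermitian_cinner_real[OF assms(1), of v] assms(3)
    by (simp add: cinner_smult_right cinner_self)
  then show ?thesis
    using \<open>v \<noteq> 0\<close>
    by (metis Reals_divide Reals_of_real inner_eq_zero_iff nonzero_mult_div_cancel_right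
      of_real_eq_0_iff)
qed

lemma hermitian_min_eigenvector:
  assumes "hermitian_cmat A"
  obtains \<mu> v where "norm v = 1" and "A *v v = \<mu> *\<^sub>R v"
    and "\<And>x. \<mu> * inner x x \<le> inner x (A *v x)"
proof -
  let ?S = "sphere (0 :: complex^'n) 1"
  let ?q = "\<lambda>x. inner x (A *v x)"
  obtain u :: "complex^'n" where "norm u = 1"
    using vector_choose_size[of 1] by auto
  then have nonempty: "?S \<noteq> {}" by auto
  have cont: "continuous_on ?S ?q"
    by (intro continuous_intros)
  obtain v where v: "v \<in> ?S" and min: "\<And>y. y \<in> ?S \<Longrightarrow> ?q v \<le> ?q y"
    using continuous_attains_inf[OF compact_sphere nonempty cont] by blast
  define \<mu> where "\<mu> = ?q v"
  have bound: "\<mu> * inner x x \<le> ?q x" for x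
  proof (cases "x = 0")
    case False
    have "\<mu> \<le> ?q ((1 / norm x) *\<^sub>R x)"
      unfolding \<mu>_def using False by (intro min) simp
    also have "\<dots> = ?q x / (norm x)\<^sup>2"
      by (simp add: linear_simps power2_eq_square)
    finally show ?thesis
      using False by (simp add: field_simps power2_norm_eq_inner)
  qed simp
  define f where "f x = A *v x - \<mu> *\<^sub>R x" for x
  have "f v = 0"
  proof (rule self_adjoint_nonneg_eq_0[of f])
    show "linear f"
      unfolding f_def by (intro real_vector.module_hom_sub linear_scaleR bounded_linear.linear
        matrix_vector_mul_bounded_linear)
    show "inner x (f y) = inner (f x) y" for x y
      using hermitian_inner_mult_vec[OF assms, of x y]
      by (simp add: f_def inner_diff_left inner_diff_right inner_commute)
    show "0 \<le> inner x (f x)" for x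
      using bound[of x] by (simp add: f_def inner_diff_right)
    show "inner v (f v) = 0"
      using v by (simp add: f_def inner_diff_right \<mu>_def power2_norm_eq_inner[symmetric])
  qed
  then show ?thesis
    using that[of v \<mu>] v bound by (simp add: f_def)
qed

lemma scaleR_eq_of_real_smult: "r *\<^sub>R (v :: 'a::real_algebra_1^'n) = of_real r *s v"
proof (rule Finite_Cartesian_Product.vec_eq_iff[THEN iffD2], rule allI)
  fix i
  show "(r *\<^sub>R v) $ i = (of_real r *s v) $ i"
    by (simp only: vector_scaleR_component vector_smult_component) (simp add: scaleR_conv_of_real)
qed

lemma hermitian_psd_iff_eigenvalues_nonneg:
  assumes "hermitian_cmat A"
  shows "psd_cmat A \<longleftrightarrow> (\<forall>c v. v \<noteq> 0 \<longrightarrow> A *v v = c *s v \<longrightarrow> 0 \<le> Re c)"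
proof
  assume psd: "psd_cmat A"
  show "\<forall>c v. v \<noteq> 0 \<longrightarrow> A *v v = c *s v \<longrightarrow> 0 \<le> Re c"
  proof (intro allI impI)
    fix c v assume "v \<noteq> 0" and eigen: "A *v v = c *s v"
    then have "c = of_real (Re c)"
      using hermitian_eigenvalue_real[OF assms] by (simp add: of_real_Re)
    then have "inner v (A *v v) = Re c * inner v v"
      using eigen scaleR_eq_of_real_smult by (metis inner_scaleR_right)
    moreover have "0 \<le> inner v (A *v v)" and "0 < inner v v"
      using psd \<open>v \<noteq> 0\<close> by (simp_all add: psd_cmat_iff)
    ultimately show "0 \<le> Re c"
      by (metis mult_neg_pos not_le)
  qed
next
  assume nonneg: "\<forall>c v. v \<noteq> 0 \<longrightarrow> A *v v = c *s v \<longrightarrow> 0 \<le> Re c"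
  obtain \<mu> v where "norm v = 1" "A *v v = \<mu> *\<^sub>R v"
    and bound: "\<And>x. \<mu> * inner x x \<le> inner x (A *v x)"
    using hermitian_min_eigenvector[OF assms] by blast
  then have "0 \<le> \<mu>"
    using nonneg by (metis Re_complex_of_real norm_zero scaleR_eq_of_real_smult zero_neq_one)
  then have "0 \<le> inner x (A *v x)" for x
    using bound[of x] by (smt (verit) inner_ge_zero mult_nonneg_nonneg)
  then show "psd_cmat A"
    using assms by (simp add: psd_cmat_iff)
qed

section \<open>Eigenvalues and traces of powers via Schur triangularisation\<close>

lemma sum_from_nat_into_UNIV:
  "(\<Sum>i<CARD('n). f (from_nat_into UNIV i :: 'n::finite)) = (\<Sum>a\<in>UNIV. f a)"
  using sum.reindex_bij_betw[OF bij_betw_from_nat_into_finite[of "UNIV :: 'n set"]] by simp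

lemma to_nat_on_UNIV_less: "to_nat_on UNIV (a :: 'n::finite) < CARD('n)"
  using to_nat_on_finite[of "UNIV :: 'n set"] by (auto simp: bij_betw_def)

lemma to_nat_on_from_nat_into_UNIV:
  "i < CARD('n) \<Longrightarrow> to_nat_on UNIV (from_nat_into UNIV i :: 'n::finite) = i"
  using to_nat_on_finite[of "UNIV :: 'n set"] by (auto simp: bij_betw_def)

lemma from_nat_into_UNIV_inject:
  "i < CARD('n) \<Longrightarrow> j < CARD('n) \<Longrightarrow>
    from_nat_into UNIV i = (from_nat_into UNIV j :: 'n::finite) \<longleftrightarrow> i = j"
  using bij_betw_from_nat_into_finite[of "UNIV :: 'n set"] by (auto simp: bij_betw_def inj_on_def)

definition jnf_mat :: "'a^'n^'n::finite \<Rightarrow> 'a mat" where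
  "jnf_mat A = Matrix.mat CARD('n) CARD('n) (\<lambda>(i, j). A $ from_nat_into UNIV i $ from_nat_into UNIV j)"

definition jnf_vec :: "'a^'n::finite \<Rightarrow> 'a Matrix.vec" where
  "jnf_vec v = Matrix.vec CARD('n) (\<lambda>i. v $ from_nat_into UNIV i)"

lemma jnf_mat_carrier [simp]: "jnf_mat (A :: 'a^'n^'n::finite) \<in> carrier_mat CARD('n) CARD('n)"
  by (simp add: jnf_mat_def)

lemma jnf_mat_dim [simp]:
  "dim_row (jnf_mat (A :: 'a^'n^'n::finite)) = CARD('n)"
  "dim_col (jnf_mat (A :: 'a^'n^'n::finite)) = CARD('n)"
  by (simp_all add: jnf_mat_def)

lemma jnf_vec_carrier [simp]: "jnf_vec (v :: 'a^'n::finite) \<in> carrier_vec CARD('n)"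
  by (simp add: jnf_vec_def)

lemma jnf_mat_mult: "jnf_mat ((A :: 'a::semiring_1^'n^'n::finite) ** B) = jnf_mat A * jnf_mat B"
  by (rule eq_matI)
    (simp_all add: jnf_mat_def matrix_matrix_mult_def scalar_prod_def atLeast0LessThan
      sum_from_nat_into_UNIV[symmetric])

lemma jnf_mat_one:
  "jnf_mat (Finite_Cartesian_Product.mat 1 :: 'a::semiring_1^'n^'n::finite) = 1\<^sub>m CARD('n)"
  by (rule eq_matI)
    (auto simp: jnf_mat_def Finite_Cartesian_Product.mat_def from_nat_into_UNIV_inject)

lemma mpow_Suc_right: "mpow A (Suc k) = mpow A k ** A"
  by (induction k) (simp_all add: matrix_mul_assoc)

lemma jnf_mat_mpow: "jnf_mat (mpow A l) = jnf_mat A ^\<^sub>m l"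
  by (induction l) (simp_all add: jnf_mat_one mpow_Suc_right jnf_mat_mult del: mpow.simps(2))

lemma jnf_mat_mult_vec: "jnf_mat (A :: 'a::semiring_1^'n^'n::finite) *\<^sub>v jnf_vec v = jnf_vec (A *v v)"
  by (rule eq_vecI)
    (simp_all add: jnf_mat_def jnf_vec_def matrix_vector_mult_def scalar_prod_def atLeast0LessThan
      sum_from_nat_into_UNIV[symmetric])

lemma jnf_vec_smult: "jnf_vec (c *s v) = c \<cdot>\<^sub>v jnf_vec v"
  by (rule eq_vecI) (simp_all add: jnf_vec_def)

lemma jnf_vec_inject: "jnf_vec (v :: 'a^'n::finite) = jnf_vec w \<longleftrightarrow> v = w"
proof
  assume "jnf_vec v = jnf_vec w"
  then have "v $ from_nat_into UNIV (to_nat_on UNIV a) = w $ from_nat_into UNIV (to_nat_on UNIV a)"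
    for a :: 'n
    using to_nat_on_UNIV_less[of a] by (metis jnf_vec_def index_vec)
  then show "v = w"
    by (simp add: Finite_Cartesian_Product.vec_eq_iff)
qed simp

lemma jnf_vec_zero: "jnf_vec (0 :: 'a::zero^'n::finite) = 0\<^sub>v CARD('n)"
  by (rule eq_vecI) (simp_all add: jnf_vec_def)

lemma jnf_vec_right_inverse:
  assumes "w \<in> carrier_vec CARD('n::finite)"
  shows "jnf_vec (\<chi> a::'n. vec_index w (to_nat_on UNIV a)) = w"
  using assms by (intro eq_vecI) (auto simp: jnf_vec_def to_nat_on_from_nat_into_UNIV)

lemma eigenvalue_jnf_mat_iff:
  "eigenvalue (jnf_mat (A :: 'a::comm_ring_1^'n^'n::finite)) c \<longleftrightarrow> (\<exists>v. v \<noteq> 0 \<and> A *v v = c *s v)"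
proof
  assume "eigenvalue (jnf_mat A) c"
  then obtain w where w: "w \<in> carrier_vec CARD('n)" "w \<noteq> 0\<^sub>v CARD('n)" "jnf_mat A *\<^sub>v w = c \<cdot>\<^sub>v w"
    by (auto simp: eigenvalue_def eigenvector_def)
  define v :: "'a^'n" where "v = (\<chi> a. vec_index w (to_nat_on UNIV a))"
  have w_eq: "w = jnf_vec v"
    unfolding v_def using jnf_vec_right_inverse[OF w(1)] by simp
  have "v \<noteq> 0" and "A *v v = c *s v"
    using w(2,3) by (simp_all add: w_eq jnf_vec_zero[symmetric] jnf_vec_inject jnf_mat_mult_vec
      jnf_vec_smult[symmetric])
  then show "\<exists>v. v \<noteq> 0 \<and> A *v v = c *s v" by blast
next
  assume "\<exists>v. v \<noteq> 0 \<and> A *v v = c *s v"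
  then obtain v where "v \<noteq> 0" "A *v v = c *s v" by blast
  then have "eigenvector (jnf_mat A) (jnf_vec v) c"
    by (simp add: eigenvector_def jnf_mat_mult_vec jnf_vec_smult jnf_vec_zero[symmetric]
      jnf_vec_inject)
  then show "eigenvalue (jnf_mat A) c"
    unfolding eigenvalue_def by blast
qed

definition mat_trace :: "'a::comm_ring_1 mat \<Rightarrow> 'a" where
  "mat_trace M = (\<Sum>i<dim_row M. M $$ (i, i))"

lemma trace_eq_mat_trace: "trace (A :: 'a::comm_ring_1^'n^'n::finite) = mat_trace (jnf_mat A)"
  by (simp add: mat_trace_def trace_def jnf_mat_def sum_from_nat_into_UNIV[of "\<lambda>a. A $ a $ a"])

lemma mat_trace_mult_commute:
  assumes "A \<in> carrier_mat n m" and "B \<in> carrier_mat m n"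
  shows "mat_trace (A * B) = mat_trace (B * A)"
proof -
  have "mat_trace (A * B) = (\<Sum>i<n. \<Sum>k<m. A $$ (i, k) * B $$ (k, i))"
    using assms by (simp add: mat_trace_def scalar_prod_def atLeast0LessThan)
  also have "\<dots> = (\<Sum>k<m. \<Sum>i<n. B $$ (k, i) * A $$ (i, k))"
    by (subst sum.swap) (simp add: mult.commute)
  also have "\<dots> = mat_trace (B * A)"
    using assms by (simp add: mat_trace_def scalar_prod_def atLeast0LessThan)
  finally show ?thesis .
qed

lemma upper_triangular_mult:
  assumes A: "A \<in> carrier_mat n n" and B: "B \<in> carrier_mat n n"
    and "upper_triangular A" and "upper_triangular B"
  shows "upper_triangular (A * B)"
    and "i < n \<Longrightarrow> (A * B) $$ (i, i) = A $$ (i, i) * B $$ (i, i)"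
proof -
  have A0: "A $$ (i, k) = 0" if "k < i" "i < n" for i k
    using assms that by auto
  have B0: "B $$ (k, j) = 0" if "j < k" "k < n" for j k
    using assms that by auto
  have entry: "(A * B) $$ (i, j) = (\<Sum>k<n. A $$ (i, k) * B $$ (k, j))" if "i < n" "j < n" for i j
    using A B that by (simp add: scalar_prod_def atLeast0LessThan)
  show "upper_triangular (A * B)"
  proof (rule upper_triangularI)
    fix i j assume "j < i" "i < dim_row (A * B)"
    then have "A $$ (i, k) * B $$ (k, j) = 0" if "k < n" for k
      using A A0 B0 that by (cases "k < i") auto
    then show "(A * B) $$ (i, j) = 0"
      using A entry \<open>j < i\<close> \<open>i < dim_row (A * B)\<close> by simp
  qed
  show "(A * B) $$ (i, i) = A $$ (i, i) * B $$ (i, i)" if "i < n"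
  proof -
    have "(\<Sum>k<n. A $$ (i, k) * B $$ (k, i)) = (\<Sum>k<n. if k = i then A $$ (i, i) * B $$ (i, i) else 0)"
      using A0 B0 that by (intro sum.cong) (auto simp: neq_iff)
    then show ?thesis
      using entry that by simp
  qed
qed

lemma upper_triangular_pow:
  assumes B: "B \<in> carrier_mat n n" and "upper_triangular B"
  shows "upper_triangular (B ^\<^sub>m l) \<and> (\<forall>i<n. (B ^\<^sub>m l) $$ (i, i) = (B $$ (i, i)) ^ l)"
proof (induction l)
  case 0
  show ?case using B by auto
next
  case (Suc l)
  then show ?case
    using upper_triangular_mult[of "B ^\<^sub>m l" n B] assms by (simp add: power_Suc2 del: power_Suc)
qed

lemma mat_trace_pow_eq_power_sum:
  fixes M :: "'a::conjugatable_ordered_field mat"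
  assumes M: "M \<in> carrier_mat n n" and char_poly: "char_poly M = (\<Prod>a\<leftarrow>es. [:- a, 1:])"
  shows "mat_trace (M ^\<^sub>m l) = power_sum es l"
proof -
  obtain B P Q where schur: "schur_decomposition M es = (B, P, Q)"
    by (cases "schur_decomposition M es")
  from schur_decomposition[OF M char_poly schur]
  have sim: "similar_mat_wit M B P Q" and ut: "upper_triangular B" and diag: "diag_mat B = es"
    by auto
  from sim M have carrier: "B \<in> carrier_mat n n" "P \<in> carrier_mat n n" "Q \<in> carrier_mat n n"
    and QP: "Q * P = 1\<^sub>m n"
    unfolding similar_mat_wit_def Let_def by auto
  have Bl: "B ^\<^sub>m l \<in> carrier_mat n n"
    using carrier by simp
  have "mat_trace (M ^\<^sub>m l) = mat_trace (P * (B ^\<^sub>m l * Q))"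
    using similar_mat_wit_pow_id[OF sim] assoc_mult_mat[OF carrier(2) Bl carrier(3)] by simp
  also have "\<dots> = mat_trace (B ^\<^sub>m l * Q * P)"
    using carrier Bl by (subst mat_trace_mult_commute[of _ n n]) auto
  also have "\<dots> = mat_trace (B ^\<^sub>m l)"
    using assoc_mult_mat[OF Bl carrier(3,2)] QP right_mult_one_mat[OF Bl] by simp
  also have "\<dots> = (\<Sum>i<n. (B $$ (i, i)) ^ l)"
    using upper_triangular_pow[OF carrier(1) ut] carrier by (simp add: mat_trace_def)
  also have "\<dots> = power_sum es l"
    using carrier by (simp add: power_sum_def diag[symmetric] diag_mat_def
      sum_list_sum_nth atLeast0LessThan)
  finally show ?thesis .
qed

lemma cmat_eigenvalue_list:
  fixes X :: "complex^'n^'n::finite"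
  obtains es where "length es = CARD('n)"
    and "\<And>c. c \<in> set es \<longleftrightarrow> (\<exists>v. v \<noteq> 0 \<and> X *v v = c *s v)"
    and "\<And>l. trace (mpow X l) = power_sum es l"
proof -
  obtain es where char_poly: "char_poly (jnf_mat X) = (\<Prod>a\<leftarrow>es. [:- a, 1:])"
    and "length es = CARD('n)"
    using char_poly_factorized[OF jnf_mat_carrier] by blast
  moreover have "c \<in> set es \<longleftrightarrow> (\<exists>v. v \<noteq> 0 \<and> X *v v = c *s v)" for c
    unfolding eigenvalue_jnf_mat_iff[symmetric] eigenvalue_root_char_poly[OF jnf_mat_carrier]
      char_poly
    by (simp add: poly_prod_list prod_list_zero_iff image_iff eq_commute[of 0])
  moreover have "trace (mpow X l) = power_sum es l" for l
    using mat_trace_pow_eq_power_sum[OF jnf_mat_carrier char_poly]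
    by (simp add: trace_eq_mat_trace jnf_mat_mpow)
  ultimately show ?thesis
    using that by blast
qed

section \<open>The positivity criterion\<close>

lemma hermitian_psd_iff_Sfun_nonneg:
  fixes X :: "complex^'n^'n"
  assumes "hermitian_cmat X"
  shows "psd_cmat X \<longleftrightarrow> (\<forall>m\<in>{1..CARD('n)}. Sfun m X \<in> \<real> \<and> 0 \<le> Re (Sfun m X))"
proof -
  obtain es where length: "length es = CARD('n)"
    and eigen: "\<And>c. c \<in> set es \<longleftrightarrow> (\<exists>v. v \<noteq> 0 \<and> X *v v = c *s v)"
    and trace: "\<And>l. trace (mpow X l) = power_sum es l"
    using cmat_eigenvalue_list[where X = X] by blast
  define rs where "rs = map Re es"
  have "map (of_real \<circ> Re) es = es"
    using hermitian_eigenvalue_real[OF assms] eigen by (intro map_idI) auto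
  then have "es = map of_real rs"
    by (simp add: rs_def)
  then have Sfun: "Sfun m X = of_real (elem_sym rs m)" for m
    using Sfun_eq_elem_sym[OF trace] elem_sym_map_of_real by metis
  have "psd_cmat X \<longleftrightarrow> (\<forall>c\<in>set es. 0 \<le> Re c)"
    using hermitian_psd_iff_eigenvalues_nonneg[OF assms] eigen by blast
  also have "\<dots> \<longleftrightarrow> (\<forall>r\<in>set rs. 0 \<le> r)"
    by (simp add: rs_def)
  also have "\<dots> \<longleftrightarrow> (\<forall>m\<in>{1..length rs}. 0 \<le> elem_sym rs m)"
    by (rule elem_sym_nonneg_iff[symmetric])
  also have "\<dots> \<longleftrightarrow> (\<forall>m\<in>{1..CARD('n)}. Sfun m X \<in> \<real> \<and> 0 \<le> Re (Sfun m X))"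
    using length by (simp add: Sfun rs_def)
  finally show ?thesis .
qed

lemma scaleR_matrix_vector_mult: "(c *\<^sub>R A) *v x = c *\<^sub>R (A *v (x :: 'a::real_algebra_1^'n))"
  by (simp add: Finite_Cartesian_Product.vec_eq_iff matrix_vector_mult_def scaleR_sum_right)

lemma hermitian_cmat_diff_scaleR:
  "hermitian_cmat A \<Longrightarrow> hermitian_cmat B \<Longrightarrow> hermitian_cmat (a *\<^sub>R A - b *\<^sub>R B)"
  by (simp add: hermitian_cmat_iff complex_cnj_scaleR)

lemma psd_cmat_add_scaleR:
  assumes "psd_cmat A" and "psd_cmat B" and "0 \<le> a" and "0 \<le> b"
  shows "psd_cmat (a *\<^sub>R A + b *\<^sub>R B)"
proof -
  have "hermitian_cmat (a *\<^sub>R A + b *\<^sub>R B)"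
    using assms(1,2) by (simp add: psd_cmat_iff hermitian_cmat_iff complex_cnj_scaleR)
  moreover have "0 \<le> inner x ((a *\<^sub>R A + b *\<^sub>R B) *v x)" for x
    using assms by (simp add: psd_cmat_iff matrix_vector_mult_add_rdistrib scaleR_matrix_vector_mult
      inner_add_right)
  ultimately show ?thesis
    by (simp add: psd_cmat_iff)
qed

lemma trace_scaleR: "trace (c *\<^sub>R (A :: 'a::real_algebra_1^'n^'n)) = c *\<^sub>R trace A"
  by (simp add: trace_def scaleR_sum_right)

lemma density_mixture_iff_psd:
  assumes \<rho>: "\<rho> \<in> density_ops" and \<eta>: "\<eta> \<in> density_ops" and "0 < s" and "s < 1"
  shows "(\<exists>s' \<tau>. 0 < s' \<and> s' \<le> s \<and> \<tau> \<in> density_ops \<and>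
            \<eta> = (1 / (1 - s')) *\<^sub>R (\<rho> - s' *\<^sub>R \<tau>))
    \<longleftrightarrow> psd_cmat ((1 / s) *\<^sub>R \<rho> - ((1 - s) / s) *\<^sub>R \<eta>)"
    (is "?mixture \<longleftrightarrow> psd_cmat ?X")
proof
  assume ?mixture
  then obtain s' \<tau> where s': "0 < s'" "s' \<le> s" and \<tau>: "\<tau> \<in> density_ops"
    and \<eta>_eq: "\<eta> = (1 / (1 - s')) *\<^sub>R (\<rho> - s' *\<^sub>R \<tau>)"
    by blast
  have \<rho>_eq: "\<rho> = (1 - s') *\<^sub>R \<eta> + s' *\<^sub>R \<tau>"
    using \<eta>_eq s' \<open>s < 1\<close> by simp
  have "?X = ((1 - s') / s) *\<^sub>R \<eta> + (s' / s) *\<^sub>R \<tau> - ((1 - s) / s) *\<^sub>R \<eta>"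
    unfolding \<rho>_eq by (simp add: scaleR_add_right)
  also have "\<dots> = ((1 - s') / s - (1 - s) / s) *\<^sub>R \<eta> + (s' / s) *\<^sub>R \<tau>"
    by (simp add: scaleR_diff_left algebra_simps)
  also have "(1 - s') / s - (1 - s) / s = (s - s') / s"
    by (simp add: diff_divide_distrib)
  finally have X_eq: "?X = ((s - s') / s) *\<^sub>R \<eta> + (s' / s) *\<^sub>R \<tau>" .
  moreover have "psd_cmat \<tau>" "psd_cmat \<eta>"
    using \<tau> \<eta> by (simp_all add: density_ops_def)
  ultimately show "psd_cmat ?X"
    unfolding X_eq using s' \<open>0 < s\<close> by (simp add: psd_cmat_add_scaleR)
next
  assume psd: "psd_cmat ?X"
  have "trace \<rho> = 1" "trace \<eta> = 1"
    using \<rho> \<eta> by (simp_all add: density_ops_def)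
  then have "trace ?X = of_real (1 / s - (1 - s) / s)"
    by (simp only: trace_sub trace_scaleR) (simp add: scaleR_conv_of_real)
  also have "1 / s - (1 - s) / s = 1"
    using \<open>0 < s\<close> by (simp add: field_simps)
  finally have "?X \<in> density_ops"
    using psd by (simp add: density_ops_def)
  moreover have "\<eta> = (1 / (1 - s)) *\<^sub>R (\<rho> - s *\<^sub>R ?X)"
    using \<open>0 < s\<close> \<open>s < 1\<close> by (simp add: scaleR_diff_right)
  ultimately show ?mixture
    using \<open>0 < s\<close> by blast
qed

theorem lemma9:
  fixes \<rho> \<eta> :: "complex^'n^'n" and s :: real
  assumes "\<rho> \<in> density_ops" and "\<eta> \<in> density_ops"
    and "0 < s" and "s < 1"
  shows "(\<exists>s' \<tau>. 0 < s' \<and> s' \<le> s \<and> \<tau> \<in> density_ops \<and>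
            \<eta> = (1 / (1 - s')) *\<^sub>R (\<rho> - s' *\<^sub>R \<tau>))
     \<longleftrightarrow> (\<forall>m\<in>{1..CARD('n)}.
            Sfun m ((1 / s) *\<^sub>R \<rho> - ((1 - s) / s) *\<^sub>R \<eta>) \<in> \<real> \<and>
            0 \<le> Re (Sfun m ((1 / s) *\<^sub>R \<rho> - ((1 - s) / s) *\<^sub>R \<eta>)))"
proof -
  have "hermitian_cmat ((1 / s) *\<^sub>R \<rho> - ((1 - s) / s) *\<^sub>R \<eta>)"
    using assms(1,2)
    by (intro hermitian_cmat_diff_scaleR) (simp_all add: density_ops_def psd_cmat_def)
  then show ?thesis
    using density_mixture_iff_psd[OF assms] hermitian_psd_iff_Sfun_nonneg by blast
qed

end
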